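(* Let $\mathbf v=(v_1,\dots,v_m)$ and $\mathbf k=(k_1,\dots,k_m)$ be $m$-tuples of positive integers with $2\le k_i\le v_i$ for all $i$, and let $v_{\max}=\max_i v_i$ and $k_{\min}=\min_i k_i$. Then $C(\mathbf v,\mathbf k,2)\le C(v_{\max},k_{\min},2)$.
   Context: Let $X_1,\dots,X_m$ be pairwise disjoint sets with $|X_i|=v_i$. A block is an $m$-tuple $(B_1,\dots,B_m)$ with $B_i\subseteq X_i$, $|B_i|=k_i$. An $m$-tuple of sets $(T_1,\dots,T_m)$ is $(\mathbf v,\mathbf k,2)$-admissible if $T_i\subseteq X_i$, $|T_i|\le k_i$ and $\sum|T_i|=2$; it is contained in a block if $T_i\subseteq B_i$ for all $i$. A ${\rm GC}(\mathbf v,\mathbf k,2)$ is a finite family (repetitions allowed) of blocks containing every admissible tuple in at least one block; $C(\mathbf v,\mathbf k,2)$ is the minimum number of blocks. For integers $v\ge k\ge2$, $C(v,k,2)$ is the ordinary covering number: the minimum number of $k$-subsets of a $v$-set such that every $2$-subset is contained in at least one of them. *)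

theory Defs
  imports Main
begin

text \<open>Ground sets: X_i is modelled as {..<v i} (tagged by the index i implicitly,
  so the X_i are pairwise disjoint). Tuples are functions nat => nat set,
  only the indices i < m are relevant.\<close>

definition gc_block :: "nat \<Rightarrow> (nat \<Rightarrow> nat) \<Rightarrow> (nat \<Rightarrow> nat) \<Rightarrow> (nat \<Rightarrow> nat set) \<Rightarrow> bool" where
  "gc_block m v k B \<longleftrightarrow> (\<forall>i<m. B i \<subseteq> {..<v i} \<and> card (B i) = k i)"

definition gc_admissible :: "nat \<Rightarrow> (nat \<Rightarrow> nat) \<Rightarrow> (nat \<Rightarrow> nat) \<Rightarrow> (nat \<Rightarrow> nat set) \<Rightarrow> bool" where
  "gc_admissible m v k T \<longleftrightarrow>
     (\<forall>i<m. T i \<subseteq> {..<v i} \<and> card (T i) \<le> k i) \<and> (\<Sum>i<m. card (T i)) = 2"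

definition gc_contained :: "nat \<Rightarrow> (nat \<Rightarrow> nat set) \<Rightarrow> (nat \<Rightarrow> nat set) \<Rightarrow> bool" where
  "gc_contained m T B \<longleftrightarrow> (\<forall>i<m. T i \<subseteq> B i)"

text \<open>A GC(v,k,2): a finite family (list, so repetitions allowed) of blocks
  containing every admissible tuple in at least one block.\<close>
definition is_GC :: "nat \<Rightarrow> (nat \<Rightarrow> nat) \<Rightarrow> (nat \<Rightarrow> nat) \<Rightarrow> (nat \<Rightarrow> nat set) list \<Rightarrow> bool" where
  "is_GC m v k F \<longleftrightarrow> (\<forall>B\<in>set F. gc_block m v k B) \<and>
     (\<forall>T. gc_admissible m v k T \<longrightarrow> (\<exists>B\<in>set F. gc_contained m T B))"

definition GC_number :: "nat \<Rightarrow> (nat \<Rightarrow> nat) \<Rightarrow> (nat \<Rightarrow> nat) \<Rightarrow> nat" where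
  "GC_number m v k = (LEAST n. \<exists>F. is_GC m v k F \<and> length F = n)"

definition is_covering :: "nat \<Rightarrow> nat \<Rightarrow> nat set list \<Rightarrow> bool" where
  "is_covering v k F \<longleftrightarrow> (\<forall>B\<in>set F. B \<subseteq> {..<v} \<and> card B = k) \<and>
     (\<forall>P. P \<subseteq> {..<v} \<and> card P = 2 \<longrightarrow> (\<exists>B\<in>set F. P \<subseteq> B))"

definition covering_number :: "nat \<Rightarrow> nat \<Rightarrow> nat" where
  "covering_number v k = (LEAST n. \<exists>F. is_covering v k F \<and> length F = n)"

end

theory Submission
  imports Defs
begin

text \<open>Let \<open>V\<close> be the largest \<open>v\<^sub>i\<close> and \<open>K\<close> the smallest \<open>k\<^sub>i\<close>, and take a
  minimum covering of the \<open>V\<close>-set \<open>{..<V}\<close> by \<open>K\<close>-sets. Identify each \<open>X\<^sub>i\<close> with the initial segment \<open>{..<v\<^sub>i}\<close> of \<open>{..<V}\<close>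
  and turn a covering block \<open>B\<close> into the GC block whose \<open>i\<close>-th part is some \<open>k\<^sub>i\<close>-subset
  of \<open>X\<^sub>i\<close> containing \<open>B \<inter> X\<^sub>i\<close>; it exists because \<open>|B \<inter> X\<^sub>i| \<le> K \<le> k\<^sub>i \<le> v\<^sub>i\<close>.
  An admissible tuple has at most two points in total, so their union lies in some
  covering block \<open>B\<close>, and then the tuple lies in the GC block obtained from \<open>B\<close>.\<close>

lemma is_covering_all_subsets:
  assumes "2 \<le> k" "k \<le> v"
  shows "\<exists>F. is_covering v k F"
proof -
  have "finite {B. B \<subseteq> {..<v} \<and> card B = k}"
    by (rule finite_subset[of _ "Pow {..<v}"]) auto
  then obtain F where F: "set F = {B. B \<subseteq> {..<v} \<and> card B = k}"
    using finite_list by metis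
  have "\<exists>B\<in>set F. P \<subseteq> B" if "P \<subseteq> {..<v}" "card P = 2" for P
  proof -
    have "card P \<le> k" "k \<le> card {..<v}"
      using that assms by simp_all
    then obtain B where "P \<subseteq> B" "B \<subseteq> {..<v}" "card B = k"
      using exists_subset_between[OF _ _ \<open>P \<subseteq> {..<v}\<close>] by blast
    with F show ?thesis by blast
  qed
  with F have "is_covering v k F"
    unfolding is_covering_def by blast
  then show ?thesis by blast
qed

lemma covering_number_attained:
  assumes "2 \<le> k" "k \<le> v"
  obtains F where "is_covering v k F" "length F = covering_number v k"
proof -
  obtain F0 where "is_covering v k F0"
    using is_covering_all_subsets[OF assms] by blast
  then have "\<exists>n F. is_covering v k F \<and> length F = n"
    by blast
  then have "\<exists>F. is_covering v k F \<and> length F = covering_number v k"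
    unfolding covering_number_def by (rule LeastI_ex)
  then show thesis
    using that by blast
qed

lemma GC_number_le_length:
  assumes "is_GC m v k F"
  shows "GC_number m v k \<le> length F"
  unfolding GC_number_def using assms by (intro Least_le) blast

lemma is_covering_covers_small_sets:
  assumes "is_covering v k F" "2 \<le> v" "U \<subseteq> {..<v}" "card U \<le> 2"
  obtains B where "B \<in> set F" "U \<subseteq> B"
proof -
  have "card U \<le> 2" "2 \<le> card {..<v}"
    using assms(2,4) by simp_all
  then obtain P where P: "U \<subseteq> P" "P \<subseteq> {..<v}" "card P = 2"
    using exists_subset_between[OF _ _ \<open>U \<subseteq> {..<v}\<close>] by blast
  have "\<forall>P. P \<subseteq> {..<v} \<and> card P = 2 \<longrightarrow> (\<exists>B\<in>set F. P \<subseteq> B)"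
    using assms(1) unfolding is_covering_def by (rule conjunct2)
  with P obtain B where "B \<in> set F" "P \<subseteq> B"
    by blast
  with \<open>U \<subseteq> P\<close> show thesis
    using that by blast
qed

definition pad_block :: "(nat \<Rightarrow> nat) \<Rightarrow> (nat \<Rightarrow> nat) \<Rightarrow> nat set \<Rightarrow> nat \<Rightarrow> nat set" where
  "pad_block v k B i = (SOME C. B \<inter> {..<v i} \<subseteq> C \<and> C \<subseteq> {..<v i} \<and> card C = k i)"

lemma pad_block_spec:
  assumes "finite B" "card B \<le> k i" "k i \<le> v i"
  shows "B \<inter> {..<v i} \<subseteq> pad_block v k B i" "pad_block v k B i \<subseteq> {..<v i}"
    and "card (pad_block v k B i) = k i"
proof -
  have "card (B \<inter> {..<v i}) \<le> k i"
    using card_mono[OF assms(1), of "B \<inter> {..<v i}"] assms(2) by auto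
  then have "\<exists>C. B \<inter> {..<v i} \<subseteq> C \<and> C \<subseteq> {..<v i} \<and> card C = k i"
    using exists_subset_between[of "B \<inter> {..<v i}" "k i" "{..<v i}"] assms(3) by auto
  then have "B \<inter> {..<v i} \<subseteq> pad_block v k B i \<and> pad_block v k B i \<subseteq> {..<v i}
      \<and> card (pad_block v k B i) = k i"
    unfolding pad_block_def by (rule someI_ex)
  then show "B \<inter> {..<v i} \<subseteq> pad_block v k B i" "pad_block v k B i \<subseteq> {..<v i}"
    and "card (pad_block v k B i) = k i" by blast+
qed

lemma card_Union_admissible_le_2:
  assumes "gc_admissible m v k T"
  shows "card (\<Union>i<m. T i) \<le> 2"
proof -
  have "card (\<Union>i<m. T i) \<le> (\<Sum>i<m. card (T i))"
    by (rule card_UN_le) simp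
  with assms show ?thesis
    unfolding gc_admissible_def by simp
qed

lemma is_GC_pad_covering:
  assumes cov: "is_covering V K F" and "2 \<le> V"
    and bounds: "\<forall>i<m. K \<le> k i \<and> k i \<le> v i \<and> v i \<le> V"
  shows "is_GC m v k (map (pad_block v k) F)"
  unfolding is_GC_def
proof (intro conjI allI impI ballI)
  have pad: "B \<inter> {..<v i} \<subseteq> pad_block v k B i" "pad_block v k B i \<subseteq> {..<v i}"
      "card (pad_block v k B i) = k i" if "B \<in> set F" "i < m" for B i
  proof -
    have "finite B" "card B = K"
      using cov that(1) unfolding is_covering_def by (auto intro: finite_subset)
    then show "B \<inter> {..<v i} \<subseteq> pad_block v k B i" "pad_block v k B i \<subseteq> {..<v i}"
        "card (pad_block v k B i) = k i"
      using pad_block_spec[of B k i v] bounds that(2) by auto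
  qed
  show "gc_block m v k B'" if "B' \<in> set (map (pad_block v k) F)" for B'
  proof -
    from that obtain B where "B \<in> set F" "B' = pad_block v k B"
      unfolding set_map by blast
    then show ?thesis
      using pad unfolding gc_block_def by simp
  qed
  fix T assume T: "gc_admissible m v k T"
  have T_sub: "T i \<subseteq> {..<v i}" if "i < m" for i
    using T that by (simp add: gc_admissible_def)
  have "(\<Union>i<m. T i) \<subseteq> {..<V}"
  proof (rule UN_least)
    fix i assume "i \<in> {..<m}"
    then have "T i \<subseteq> {..<v i}" "v i \<le> V"
      using T_sub bounds by simp_all
    then show "T i \<subseteq> {..<V}" by auto
  qed
  then obtain B where B: "B \<in> set F" "(\<Union>i<m. T i) \<subseteq> B"
    by (rule is_covering_covers_small_sets[OF cov \<open>2 \<le> V\<close> _ card_Union_admissible_le_2[OF T]])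
  have "T i \<subseteq> pad_block v k B i" if "i < m" for i
  proof -
    have "T i \<subseteq> B \<inter> {..<v i}"
      using B(2) T_sub[OF that] that by blast
    then show ?thesis
      using pad(1)[OF B(1) that] by (rule order_trans)
  qed
  then show "\<exists>B'\<in>set (map (pad_block v k) F). gc_contained m T B'"
    using B(1) unfolding gc_contained_def by auto
qed

theorem theorem3p18:
  fixes m :: nat and v k :: "nat \<Rightarrow> nat"
  assumes "m \<ge> 1"
    and "\<forall>i<m. 2 \<le> k i \<and> k i \<le> v i"
  shows "GC_number m v k \<le>
           covering_number (Max (v ` {..<m})) (Min (k ` {..<m}))"
proof -
  define V where "V = Max (v ` {..<m})"
  define K where "K = Min (k ` {..<m})"
  have "0 \<in> {..<m}"
    using \<open>m \<ge> 1\<close> by simp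
  then have "K \<in> k ` {..<m}"
    unfolding K_def by (intro Min_in) auto
  then obtain j where "j < m" "K = k j" by auto
  have bounds: "\<forall>i<m. K \<le> k i \<and> k i \<le> v i \<and> v i \<le> V"
    using assms(2) unfolding K_def V_def by auto
  have "2 \<le> K" "K \<le> V"
    using assms(2) bounds \<open>j < m\<close> \<open>K = k j\<close> by (auto intro: order_trans)
  then obtain F where F: "is_covering V K F" "length F = covering_number V K"
    using covering_number_attained by blast
  have "is_GC m v k (map (pad_block v k) F)"
    using is_GC_pad_covering[OF F(1) _ bounds] \<open>2 \<le> K\<close> \<open>K \<le> V\<close> by simp
  then have "GC_number m v k \<le> covering_number V K"
    using GC_number_le_length F(2) by (metis length_map)
  then show ?thesis
    by (simp only: V_def K_def)
qed

end
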